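(* Let $P$ be a poset and let $2\leq\alpha,\beta\leq\omega$. If $P$ is $(\alpha,\beta)$-representable, then $\exists$ has an $\omega$-strategy in the $(\alpha,\beta)$-game with starting position $(\{p\},\{q\})$ for all $p,q\in P$ with $p\not\leq q$. Moreover, if $P$ is countable, then the converse holds.
   Context: A poset $P$ is $(\alpha,\beta)$-representable if there is a set $X$ and an order embedding $h:P\to\wp(X)$ ($\wp(X)$ ordered by inclusion) such that whenever $S\subseteq P$ with $|S|<\alpha$ and $\bigwedge S$ exists in $P$ then $h(\bigwedge S)=\bigcap h[S]$ (with $\bigcap\emptyset=X$), and whenever $T\subseteq P$ with $|T|<\beta$ and $\bigvee T$ exists in $P$ then $h(\bigvee T)=\bigcup h[T]$. The $(\alpha,\beta)$-game on $P$ with starting position $(U_0,V)$, $U_0,V\subseteq P$, is played between $\forall$ and $\exists$ in rounds $0,1,2,\ldots$; a set $U$ is maintained, initially $U_0$, with $V$ fixed. In each round $\forall$ moves and then $\exists$ responds: (1) if $b\geq a$ for some $a\in U$, $\forall$ may play $(b)$ and $\exists$ must add $b$ to $U$; (2) if $A\subseteq U$ with $|A|<\alpha$ and $\bigwedge A$ exists in $P$, $\forall$ may play $A$ and $\exists$ must add $\bigwedge A$ to $U$; (3) if $B\subseteq P$ with $|B|<\beta$ and $\bigvee B$ exists in $P$ and lies in $U$, $\forall$ may play $B$ and $\exists$ must choose some $b\in B$ and add it to $U$. $\forall$ wins in round $n$ if $U\cap V\neq\emptyset$ at the beginning of round $n$. $\exists$ has an $\omega$-strategy if she can guarantee that $\forall$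 never wins, however he plays. *)

theory Defs
  imports Main "HOL-Library.Extended_Nat" "HOL-Library.Countable_Set"
begin

text \<open>The poset P is the whole carrier of a type of class order.
  Cardinal bounds 2 \<le> alpha, beta \<le> omega are elements of enat, with omega = \<infinity>.\<close>

definition card_lt :: "'x set \<Rightarrow> enat \<Rightarrow> bool" where
  "card_lt S k \<longleftrightarrow> finite S \<and> enat (card S) < k"

definition is_meet :: "'a::order set \<Rightarrow> 'a \<Rightarrow> bool" where
  "is_meet S m \<longleftrightarrow> (\<forall>s\<in>S. m \<le> s) \<and> (\<forall>x. (\<forall>s\<in>S. x \<le> s) \<longrightarrow> x \<le> m)"

definition is_join :: "'a::order set \<Rightarrow> 'a \<Rightarrow> bool" where
  "is_join S m \<longleftrightarrow> (\<forall>s\<in>S. s \<le> m) \<and> (\<forall>x. (\<forall>s\<in>S. s \<le> x) \<longrightarrow> m \<le> x)"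

definition is_representation :: "enat \<Rightarrow> enat \<Rightarrow> 'b set \<Rightarrow> ('a::order \<Rightarrow> 'b set) \<Rightarrow> bool" where
  "is_representation \<alpha> \<beta> X h \<longleftrightarrow>
     (\<forall>p. h p \<subseteq> X) \<and>
     (\<forall>p q. p \<le> q \<longleftrightarrow> h p \<subseteq> h q) \<and>
     (\<forall>S m. card_lt S \<alpha> \<and> is_meet S m \<longrightarrow> h m = X \<inter> \<Inter>(h ` S)) \<and>
     (\<forall>T m. card_lt T \<beta> \<and> is_join T m \<longrightarrow> h m = \<Union>(h ` T))"

datatype 'a move = Up 'a | Meet "'a set" | Join "'a set"

definition legal_move :: "enat \<Rightarrow> enat \<Rightarrow> 'a::order set \<Rightarrow> 'a move \<Rightarrow> bool" where
  "legal_move \<alpha> \<beta> U mv = (case mv of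
      Up b \<Rightarrow> (\<exists>a\<in>U. a \<le> b)
    | Meet A \<Rightarrow> A \<subseteq> U \<and> card_lt A \<alpha> \<and> (\<exists>m. is_meet A m)
    | Join B \<Rightarrow> card_lt B \<beta> \<and> (\<exists>m. is_join B m \<and> m \<in> U))"

text \<open>A strategy for \<exists> maps the history of \<forall>'s moves (current move last) to
  her choice; it is only consulted for join moves.\<close>
type_synonym 'a strategy = "'a move list \<Rightarrow> 'a"

definition response :: "'a::order strategy \<Rightarrow> 'a move list \<Rightarrow> 'a move \<Rightarrow> 'a" where
  "response \<sigma> hist mv = (case mv of
      Up b \<Rightarrow> b
    | Meet A \<Rightarrow> (THE m. is_meet A m)
    | Join B \<Rightarrow> \<sigma> hist)"

fun game_state :: "'a::order set \<Rightarrow> 'a strategy \<Rightarrow> (nat \<Rightarrow> 'a move) \<Rightarrow> nat \<Rightarrow> 'a set" where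
  "game_state U0 \<sigma> ms 0 = U0"
| "game_state U0 \<sigma> ms (Suc n) =
     insert (response \<sigma> (map ms [0..<Suc n]) (ms n)) (game_state U0 \<sigma> ms n)"

definition omega_strategy :: "enat \<Rightarrow> enat \<Rightarrow> 'a::order set \<Rightarrow> 'a set \<Rightarrow> 'a strategy \<Rightarrow> bool" where
  "omega_strategy \<alpha> \<beta> U0 V \<sigma> \<longleftrightarrow>
     (\<forall>ms n. (\<forall>k<n. legal_move \<alpha> \<beta> (game_state U0 \<sigma> ms k) (ms k)) \<longrightarrow>
        game_state U0 \<sigma> ms n \<inter> V = {} \<and>
        (\<forall>k<n. \<forall>B. ms k = Join B \<longrightarrow> \<sigma> (map ms [0..<Suc k]) \<in> B))"

definition exists_has_omega_strategy :: "enat \<Rightarrow> enat \<Rightarrow> 'a::order set \<Rightarrow> 'a set \<Rightarrow> bool" where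
  "exists_has_omega_strategy \<alpha> \<beta> U0 V \<longleftrightarrow> (\<exists>\<sigma>. omega_strategy \<alpha> \<beta> U0 V \<sigma>)"

end

theory Submission
  imports Defs "HOL-Library.Nat_Bijection"
begin

text \<open>Both directions go through (\<alpha>,\<beta>)-prime filters: up-closed sets closed under meets
  of fewer than \<alpha> elements and containing a member of every set of fewer than \<beta> elements
  whose join they contain. A point x of a representation yields the prime filter of all a
  with x \<in> h a, and \<exists> wins by keeping U inside a prime filter containing p but not q.
  Conversely, if P is countable, \<forall> can schedule an enumeration of all moves so that every
  move that becomes legal is eventually played; against a winning strategy of \<exists> the union
  of the positions is then a prime filter containing p but not q. Once such prime filters
  exist for all p, q with \<not> p \<le> q, mapping a to the set of prime filters containing a is
  a representation.\<close>

lemma is_meet_unique: "is_meet A m \<Longrightarrow> is_meet A m' \<Longrightarrow> m = m'"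
  unfolding is_meet_def by (meson order_antisym)

lemma The_is_meet: "is_meet A m \<Longrightarrow> (THE m. is_meet A m) = m"
  using is_meet_unique by blast

lemma legal_move_mono: "U \<subseteq> U' \<Longrightarrow> legal_move \<alpha> \<beta> U mv \<Longrightarrow> legal_move \<alpha> \<beta> U' mv"
  unfolding legal_move_def by (cases mv) auto

lemma game_state_mono: "m \<le> n \<Longrightarrow> game_state U0 \<sigma> ms m \<subseteq> game_state U0 \<sigma> ms n"
  by (induction n rule: dec_induct) auto

subsection \<open>Prime filters\<close>

definition prime_filter :: "enat \<Rightarrow> enat \<Rightarrow> 'a::order set \<Rightarrow> bool" where
  "prime_filter \<alpha> \<beta> F \<longleftrightarrow> (\<forall>a b. a \<in> F \<longrightarrow> a \<le> b \<longrightarrow> b \<in> F) \<and>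
     (\<forall>A m. A \<subseteq> F \<and> card_lt A \<alpha> \<and> is_meet A m \<longrightarrow> m \<in> F) \<and>
     (\<forall>B m. card_lt B \<beta> \<and> is_join B m \<and> m \<in> F \<longrightarrow> (\<exists>b\<in>B. b \<in> F))"

lemma prime_filter_up: "prime_filter \<alpha> \<beta> F \<Longrightarrow> a \<in> F \<Longrightarrow> a \<le> b \<Longrightarrow> b \<in> F"
  unfolding prime_filter_def by blast

lemma prime_filter_meet:
  "prime_filter \<alpha> \<beta> F \<Longrightarrow> A \<subseteq> F \<Longrightarrow> card_lt A \<alpha> \<Longrightarrow> is_meet A m \<Longrightarrow> m \<in> F"
  unfolding prime_filter_def by blast

lemma prime_filter_join:
  "prime_filter \<alpha> \<beta> F \<Longrightarrow> card_lt B \<beta> \<Longrightarrow> is_join B m \<Longrightarrow> m \<in> F \<Longrightarrow> \<exists>b\<in>B. b \<in> F"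
  unfolding prime_filter_def by blast

lemma prime_filter_meet_iff:
  assumes "prime_filter \<alpha> \<beta> F" "card_lt S \<alpha>" "is_meet S m"
  shows "m \<in> F \<longleftrightarrow> S \<subseteq> F"
  using assms prime_filter_meet prime_filter_up unfolding is_meet_def by blast

lemma prime_filter_join_iff:
  assumes "prime_filter \<alpha> \<beta> F" "card_lt T \<beta>" "is_join T m"
  shows "m \<in> F \<longleftrightarrow> (\<exists>t\<in>T. t \<in> F)"
  using assms prime_filter_join prime_filter_up unfolding is_join_def by blast

lemma representation_point_prime_filter:
  assumes rep: "is_representation \<alpha> \<beta> X h" and "x \<in> X"
  shows "prime_filter \<alpha> \<beta> {a. x \<in> h a}"
proof -
  have "\<And>a b. a \<le> b \<Longrightarrow> h a \<subseteq> h b"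
    and "\<And>S m. card_lt S \<alpha> \<Longrightarrow> is_meet S m \<Longrightarrow> h m = X \<inter> \<Inter>(h ` S)"
    and "\<And>T m. card_lt T \<beta> \<Longrightarrow> is_join T m \<Longrightarrow> h m = \<Union>(h ` T)"
    using rep unfolding is_representation_def by blast+
  with \<open>x \<in> X\<close> show ?thesis
    unfolding prime_filter_def by auto
qed

lemma representation_from_prime_filters:
  assumes separating: "\<And>p q :: 'a::order. \<not> p \<le> q \<Longrightarrow> \<exists>F. prime_filter \<alpha> \<beta> F \<and> p \<in> F \<and> q \<notin> F"
  defines "h \<equiv> \<lambda>a::'a. {F. prime_filter \<alpha> \<beta> F \<and> a \<in> F}"
  shows "is_representation \<alpha> \<beta> {F. prime_filter \<alpha> \<beta> F} h"
  unfolding is_representation_def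
proof (intro conjI allI impI)
  show "h p \<subseteq> {F. prime_filter \<alpha> \<beta> F}" for p
    unfolding h_def by blast
  show "p \<le> q \<longleftrightarrow> h p \<subseteq> h q" for p q
  proof
    assume "p \<le> q"
    then show "h p \<subseteq> h q"
      unfolding h_def using prime_filter_up by blast
  next
    assume "h p \<subseteq> h q"
    then show "p \<le> q"
      unfolding h_def using separating by blast
  qed
  show "h m = {F. prime_filter \<alpha> \<beta> F} \<inter> \<Inter>(h ` S)" if "card_lt S \<alpha> \<and> is_meet S m" for S m
  proof (rule set_eqI)
    show "F \<in> h m \<longleftrightarrow> F \<in> {F. prime_filter \<alpha> \<beta> F} \<inter> \<Inter>(h ` S)" for F
      using that prime_filter_meet_iff[of \<alpha> \<beta> F S m] unfolding h_def by auto
  qed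
  show "h m = \<Union>(h ` T)" if "card_lt T \<beta> \<and> is_join T m" for T m
  proof (rule set_eqI)
    show "F \<in> h m \<longleftrightarrow> F \<in> \<Union>(h ` T)" for F
      using that prime_filter_join_iff[of \<alpha> \<beta> F T m] unfolding h_def by auto
  qed
qed

subsection \<open>A prime filter gives a winning strategy\<close>

definition filter_strategy :: "'a set \<Rightarrow> 'a strategy" where
  "filter_strategy F hist = (case last hist of Join B \<Rightarrow> (SOME b. b \<in> B \<and> b \<in> F) | _ \<Rightarrow> undefined)"

lemma filter_strategy_join:
  assumes "prime_filter \<alpha> \<beta> F" "legal_move \<alpha> \<beta> U (Join B)" "U \<subseteq> F"
  shows "filter_strategy F (hist @ [Join B]) \<in> B \<inter> F"
proof -
  from assms(2) obtain m where "card_lt B \<beta>" "is_join B m" "m \<in> U"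
    unfolding legal_move_def by auto
  with assms(1,3) have "\<exists>b. b \<in> B \<and> b \<in> F"
    using prime_filter_join by blast
  from someI_ex[OF this] show ?thesis
    unfolding filter_strategy_def by simp
qed

lemma game_state_filter_strategy_subset:
  assumes F: "prime_filter \<alpha> \<beta> F" and "U0 \<subseteq> F"
    and legal: "\<forall>k<n. legal_move \<alpha> \<beta> (game_state U0 (filter_strategy F) ms k) (ms k)"
  shows "game_state U0 (filter_strategy F) ms n \<subseteq> F"
  using legal
proof (induction n)
  case 0
  then show ?case using \<open>U0 \<subseteq> F\<close> by simp
next
  case (Suc n)
  let ?U = "game_state U0 (filter_strategy F) ms n"
  have U: "?U \<subseteq> F" and L: "legal_move \<alpha> \<beta> ?U (ms n)"
    using Suc by simp_all
  have "response (filter_strategy F) (map ms [0..<n] @ [ms n]) (ms n) \<in> F"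
  proof (cases "ms n")
    case (Up b)
    with L U obtain a where "a \<in> F" "a \<le> b"
      unfolding legal_move_def by auto
    with F Up show ?thesis
      unfolding response_def by (simp add: prime_filter_up)
  next
    case (Meet A)
    with L obtain m where "A \<subseteq> ?U" "card_lt A \<alpha>" "is_meet A m"
      unfolding legal_move_def by auto
    with F U Meet show ?thesis
      unfolding response_def by (simp add: The_is_meet prime_filter_meet_iff subset_trans)
  next
    case (Join B)
    with filter_strategy_join[OF F _ U] L show ?thesis
      unfolding response_def by simp
  qed
  with U show ?case by simp
qed

theorem prime_filter_omega_strategy:
  assumes F: "prime_filter \<alpha> \<beta> F" and "U0 \<subseteq> F" "V \<inter> F = {}"
  shows "omega_strategy \<alpha> \<beta> U0 V (filter_strategy F)"
  unfolding omega_strategy_def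
proof (intro allI impI conjI)
  fix ms n
  assume "\<forall>k<n. legal_move \<alpha> \<beta> (game_state U0 (filter_strategy F) ms k) (ms k)"
  then show "game_state U0 (filter_strategy F) ms n \<inter> V = {}"
    using game_state_filter_strategy_subset[OF F \<open>U0 \<subseteq> F\<close>] \<open>V \<inter> F = {}\<close> by blast
next
  fix ms n k B
  assume legal: "\<forall>k<n. legal_move \<alpha> \<beta> (game_state U0 (filter_strategy F) ms k) (ms k)"
    and "k < n" "ms k = Join B"
  then have "legal_move \<alpha> \<beta> (game_state U0 (filter_strategy F) ms k) (Join B)"
    and "game_state U0 (filter_strategy F) ms k \<subseteq> F"
    using game_state_filter_strategy_subset[OF F \<open>U0 \<subseteq> F\<close>, of k ms] by auto
  from filter_strategy_join[OF F this, of "map ms [0..<k]"] \<open>ms k = Join B\<close>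
  show "filter_strategy F (map ms [0..<Suc k]) \<in> B" by simp
qed

subsection \<open>A winning strategy on a countable poset gives a prime filter\<close>

text \<open>game_state needs the whole move sequence in advance; policy_run builds, round by round,
  the history and position of the play in which \<forall> reacts to the current position.\<close>
fun policy_run :: "'a::order strategy \<Rightarrow> (nat \<Rightarrow> 'a set \<Rightarrow> 'a move) \<Rightarrow> 'a set \<Rightarrow> nat \<Rightarrow> 'a move list \<times> 'a set" where
  "policy_run \<sigma> pol U0 0 = ([], U0)"
| "policy_run \<sigma> pol U0 (Suc n) =
     (let (hist, U) = policy_run \<sigma> pol U0 n; hist' = hist @ [pol n U]
      in (hist', insert (response \<sigma> hist' (pol n U)) U))"

lemma play_following_policy:
  "\<exists>ms. \<forall>k. ms k = pol k (game_state U0 \<sigma> ms k)"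
proof -
  define ms where "ms k = pol k (snd (policy_run \<sigma> pol U0 k))" for k
  have run: "policy_run \<sigma> pol U0 n = (map ms [0..<n], game_state U0 \<sigma> ms n)" for n
    by (induction n) (simp_all add: ms_def split_def Let_def)
  have "ms k = pol k (game_state U0 \<sigma> ms k)" for k
    using run[of k] by (simp add: ms_def[of k])
  then show ?thesis by blast
qed

lemma countable_legal_moves:
  assumes "countable (UNIV :: 'a::order set)"
  shows "countable {mv :: 'a move. \<exists>U. legal_move \<alpha> \<beta> U mv}"
proof (rule countable_subset)
  have "countable {A :: 'a set. finite A}"
    using countable_Collect_finite_subset[OF assms] by simp
  then show "countable (range Up \<union> Meet ` {A :: 'a set. finite A} \<union> Join ` {B. finite B})"
    using assms by (intro countable_Un countable_image)
  show "{mv. \<exists>U. legal_move \<alpha> \<beta> U mv} \<subseteq> range Up \<union> Meet ` {A. finite A} \<union> Join ` {B. finite B}"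
  proof
    fix mv assume "mv \<in> {mv. \<exists>U. legal_move \<alpha> \<beta> U mv}"
    then show "mv \<in> range Up \<union> Meet ` {A. finite A} \<union> Join ` {B. finite B}"
      by (cases mv) (auto simp: legal_move_def card_lt_def)
  qed
qed

definition exhaustive_play :: "enat \<Rightarrow> enat \<Rightarrow> 'a::order set \<Rightarrow> 'a strategy \<Rightarrow> (nat \<Rightarrow> 'a move) \<Rightarrow> bool" where
  "exhaustive_play \<alpha> \<beta> U0 \<sigma> ms \<longleftrightarrow>
     (\<forall>k. legal_move \<alpha> \<beta> (game_state U0 \<sigma> ms k) (ms k)) \<and>
     (\<forall>n mv. legal_move \<alpha> \<beta> (game_state U0 \<sigma> ms n) mv \<longrightarrow> (\<exists>k. ms k = mv))"

text \<open>In round k = prod_encode (i, n), \<forall> plays the i-th legal move if it is legal at that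
  point, and the harmless move Up p with p \<in> U0 otherwise; a move legal in round n stays
  legal in every later round, in particular in round prod_encode (i, n) \<ge> n.\<close>
lemma exhaustive_play_exists:
  fixes U0 :: "'a::order set"
  assumes "countable (UNIV :: 'a set)" "U0 \<noteq> {}"
  shows "\<exists>ms. exhaustive_play \<alpha> \<beta> U0 \<sigma> ms"
proof -
  obtain p where "p \<in> U0" using assms(2) by blast
  define M where "M = {mv :: 'a move. \<exists>U. legal_move \<alpha> \<beta> U mv}"
  have "countable M"
    unfolding M_def using assms(1) by (rule countable_legal_moves)
  define pol where "pol k U =
    (let mv = from_nat_into M (fst (prod_decode k)) in if legal_move \<alpha> \<beta> U mv then mv else Up p)"
    for k U
  obtain ms where ms: "\<And>k. ms k = pol k (game_state U0 \<sigma> ms k)"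
    using play_following_policy by blast
  have "legal_move \<alpha> \<beta> (game_state U0 \<sigma> ms k) (ms k)" for k
  proof -
    have "p \<in> game_state U0 \<sigma> ms k"
      using game_state_mono[of 0 k] \<open>p \<in> U0\<close> by auto
    then have "legal_move \<alpha> \<beta> (game_state U0 \<sigma> ms k) (Up p)"
      unfolding legal_move_def by auto
    then show ?thesis
      unfolding ms[of k] pol_def Let_def by simp
  qed
  moreover have "\<exists>k. ms k = mv" if legal: "legal_move \<alpha> \<beta> (game_state U0 \<sigma> ms n) mv" for n mv
  proof -
    have "mv \<in> M" using legal unfolding M_def by blast
    then obtain i where i: "from_nat_into M i = mv"
      using from_nat_into_surj[OF \<open>countable M\<close>] by blast
    define k where "k = prod_encode (i, n)"
    have "n \<le> k" unfolding k_def by (rule le_prod_encode_2)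
    then have "legal_move \<alpha> \<beta> (game_state U0 \<sigma> ms k) mv"
      using legal_move_mono[OF game_state_mono legal] by blast
    then have "ms k = mv"
      unfolding ms[of k] pol_def Let_def by (simp add: k_def i)
    then show ?thesis by blast
  qed
  ultimately show ?thesis
    unfolding exhaustive_play_def by blast
qed

lemma omega_strategyD:
  assumes "omega_strategy \<alpha> \<beta> U0 V \<sigma>"
    and "\<forall>k<n. legal_move \<alpha> \<beta> (game_state U0 \<sigma> ms k) (ms k)"
  shows "game_state U0 \<sigma> ms n \<inter> V = {}"
    and "k < n \<Longrightarrow> ms k = Join B \<Longrightarrow> \<sigma> (map ms [0..<Suc k]) \<in> B"
  using assms unfolding omega_strategy_def by simp_all

lemma finite_subset_UN_mono:
  fixes U :: "nat \<Rightarrow> 'a set"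
  assumes "mono U" "finite A" "A \<subseteq> (\<Union>n. U n)"
  shows "\<exists>n. A \<subseteq> U n"
  using assms(2,3)
proof (induction A rule: finite_induct)
  case (insert a A)
  then obtain n1 n2 where "a \<in> U n1" "A \<subseteq> U n2" by blast
  moreover have "U n1 \<subseteq> U (max n1 n2)" "U n2 \<subseteq> U (max n1 n2)"
    using \<open>mono U\<close> by (simp_all add: monoD)
  ultimately have "insert a A \<subseteq> U (max n1 n2)" by blast
  then show ?case by blast
qed simp

lemma exhaustive_play_response:
  assumes "exhaustive_play \<alpha> \<beta> U0 \<sigma> ms" "legal_move \<alpha> \<beta> (game_state U0 \<sigma> ms n) mv"
  shows "\<exists>k. ms k = mv \<and> response \<sigma> (map ms [0..<Suc k]) mv \<in> (\<Union>n. game_state U0 \<sigma> ms n)"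
proof -
  obtain k where "ms k = mv"
    using assms unfolding exhaustive_play_def by blast
  moreover have "response \<sigma> (map ms [0..<Suc k]) (ms k) \<in> game_state U0 \<sigma> ms (Suc k)" by simp
  ultimately show ?thesis by blast
qed

lemma exhaustive_play_prime_filter:
  assumes \<sigma>: "omega_strategy \<alpha> \<beta> U0 V \<sigma>"
    and play: "exhaustive_play \<alpha> \<beta> U0 \<sigma> ms"
  defines "F \<equiv> \<Union>n. game_state U0 \<sigma> ms n"
  shows "prime_filter \<alpha> \<beta> F" "U0 \<subseteq> F" "V \<inter> F = {}"
proof -
  let ?U = "game_state U0 \<sigma> ms"
  have legal: "\<forall>j<k. legal_move \<alpha> \<beta> (?U j) (ms j)" for k
    using play unfolding exhaustive_play_def by blast
  note played = exhaustive_play_response[OF play, folded F_def]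
  show "prime_filter \<alpha> \<beta> F"
    unfolding prime_filter_def
  proof (intro conjI allI impI)
    fix a b assume "a \<in> F" "a \<le> b"
    then obtain n where "a \<in> ?U n" unfolding F_def by blast
    with \<open>a \<le> b\<close> have "legal_move \<alpha> \<beta> (?U n) (Up b)"
      by (auto simp: legal_move_def)
    from played[OF this] show "b \<in> F"
      by (auto simp: response_def)
  next
    fix A m assume A: "A \<subseteq> F \<and> card_lt A \<alpha> \<and> is_meet A m"
    have "mono ?U" by (rule monoI) (rule game_state_mono)
    with A obtain n where "A \<subseteq> ?U n"
      using finite_subset_UN_mono unfolding F_def card_lt_def by blast
    with A have "legal_move \<alpha> \<beta> (?U n) (Meet A)"
      by (auto simp: legal_move_def)
    from played[OF this] show "m \<in> F"
      using A by (auto simp: response_def The_is_meet)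
  next
    fix B m assume B: "card_lt B \<beta> \<and> is_join B m \<and> m \<in> F"
    then obtain n where "m \<in> ?U n" unfolding F_def by blast
    with B have "legal_move \<alpha> \<beta> (?U n) (Join B)"
      by (auto simp: legal_move_def)
    from played[OF this] obtain k
      where "ms k = Join B" "\<sigma> (map ms [0..<Suc k]) \<in> F"
      by (auto simp: response_def)
    moreover have "\<sigma> (map ms [0..<Suc k]) \<in> B"
      using omega_strategyD(2)[OF \<sigma> legal lessI \<open>ms k = Join B\<close>] .
    ultimately show "\<exists>b\<in>B. b \<in> F" by blast
  qed
  show "U0 \<subseteq> F" unfolding F_def using UN_upper[of 0 UNIV ?U] by simp
  show "V \<inter> F = {}" unfolding F_def using omega_strategyD(1)[OF \<sigma> legal] by blast
qed

theorem omega_strategy_prime_filter: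
  assumes "countable (UNIV :: 'a::order set)" "U0 \<noteq> {}"
    and "exists_has_omega_strategy \<alpha> \<beta> U0 (V :: 'a set)"
  shows "\<exists>F. prime_filter \<alpha> \<beta> F \<and> U0 \<subseteq> F \<and> V \<inter> F = {}"
proof -
  obtain \<sigma> where \<sigma>: "omega_strategy \<alpha> \<beta> U0 V \<sigma>"
    using assms(3) unfolding exists_has_omega_strategy_def by blast
  obtain ms where "exhaustive_play \<alpha> \<beta> U0 \<sigma> ms"
    using exhaustive_play_exists[OF assms(1,2)] by blast
  from exhaustive_play_prime_filter[OF \<sigma> this] show ?thesis by blast
qed

theorem proposition5p2:
  fixes \<alpha> \<beta> :: enat
  assumes "2 \<le> \<alpha>" "\<alpha> \<le> \<infinity>" "2 \<le> \<beta>" "\<beta> \<le> \<infinity>"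
  shows "(\<forall>(X :: 'b set) (h :: 'a::order \<Rightarrow> 'b set). is_representation \<alpha> \<beta> X h \<longrightarrow>
            (\<forall>p q :: 'a. \<not> p \<le> q \<longrightarrow> exists_has_omega_strategy \<alpha> \<beta> {p} {q}))
       \<and> (countable (UNIV :: 'a set) \<longrightarrow>
            (\<forall>p q :: 'a. \<not> p \<le> q \<longrightarrow> exists_has_omega_strategy \<alpha> \<beta> {p} {q}) \<longrightarrow>
            (\<exists>(X :: 'a set set) (h :: 'a \<Rightarrow> 'a set set). is_representation \<alpha> \<beta> X h))"
proof (intro conjI allI impI)
  fix X :: "'b set" and h :: "'a \<Rightarrow> 'b set" and p q :: 'a
  assume rep: "is_representation \<alpha> \<beta> X h" and "\<not> p \<le> q"
  then have "\<not> h p \<subseteq> h q" "h p \<subseteq> X"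
    by (simp_all add: is_representation_def)
  then obtain x where "x \<in> X" "x \<in> h p" "x \<notin> h q" by blast
  have "prime_filter \<alpha> \<beta> {a. x \<in> h a}"
    using rep \<open>x \<in> X\<close> by (rule representation_point_prime_filter)
  moreover have "{p} \<subseteq> {a. x \<in> h a}" "{q} \<inter> {a. x \<in> h a} = {}"
    using \<open>x \<in> h p\<close> \<open>x \<notin> h q\<close> by auto
  ultimately have "omega_strategy \<alpha> \<beta> {p} {q} (filter_strategy {a. x \<in> h a})"
    by (rule prime_filter_omega_strategy)
  then show "exists_has_omega_strategy \<alpha> \<beta> {p} {q}"
    unfolding exists_has_omega_strategy_def by blast
next
  assume countable: "countable (UNIV :: 'a set)"
    and strategies: "\<forall>p q :: 'a. \<not> p \<le> q \<longrightarrow> exists_has_omega_strategy \<alpha> \<beta> {p} {q}"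
  have "\<exists>F. prime_filter \<alpha> \<beta> F \<and> p \<in> F \<and> q \<notin> F" if "\<not> p \<le> q" for p q :: 'a
    using omega_strategy_prime_filter[OF countable _ strategies[rule_format, OF that]] by blast
  from representation_from_prime_filters[OF this]
  show "\<exists>(X :: 'a set set) (h :: 'a \<Rightarrow> 'a set set). is_representation \<alpha> \<beta> X h"
    by blast
qed

end
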